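(* Let $r\ge 0$ be an integer and $\delta>0$. Every graph $G$ with $\tilde\nabla_{r/2}(G)\ge\delta$ contains a stable $i$-subdivision of density at least $\delta/(r+1)$ for some $i\in\{0,\dots,r\}$.
   Context: For a graph $H$, a subdivision of $H$ replaces edges of $H$ by internally vertex-disjoint paths; the vertices corresponding to $V(H)$ are called nails, the subgraph of $G$ realizing it is the model. For half-integer $s\ge0$, $H$ is an $s$-shallow topological minor of $G$ if $G$ contains as a subgraph a subdivision of $H$ in which every edge of $H$ is replaced by a path of length at most $2s+1$. Density of a graph is $|E|/|V|$, and $\tilde\nabla_s(G)$ is the maximum density of an $s$-shallow topological minor of $G$. $G$ contains $H$ as a stable $i$-subdivision if $G$ contains $H$ as an $\frac{i}{2}$-shallow topological minor with a model in which every path corresponding to an edge of $H$ has length exactly $i+1$ and is an induced path in $G$; the density of the stable subdivision is the density of $H$. *)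

theory Defs
  imports Main Complex_Main
begin

type_synonym 'a graph = "'a set \<times> 'a set set"

definition verts :: "'a graph \<Rightarrow> 'a set" where "verts G = fst G"
definition edges :: "'a graph \<Rightarrow> 'a set set" where "edges G = snd G"

definition graph :: "'a graph \<Rightarrow> bool" where
  "graph G \<longleftrightarrow> finite (verts G) \<and>
     (\<forall>e\<in>edges G. \<exists>u v. u \<in> verts G \<and> v \<in> verts G \<and> u \<noteq> v \<and> e = {u, v})"

text \<open>Density |E|/|V| (0 for the empty graph, by the convention x / 0 = 0).\<close>
definition density :: "'a graph \<Rightarrow> real" where
  "density G = real (card (edges G)) / real (card (verts G))"

definition is_path :: "'a graph \<Rightarrow> 'a list \<Rightarrow> bool" where
  "is_path G p \<longleftrightarrow> p \<noteq> [] \<and> distinct p \<and> set p \<subseteq> verts G \<and>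
     (\<forall>j. Suc j < length p \<longrightarrow> {p ! j, p ! Suc j} \<in> edges G)"

definition path_len :: "'a list \<Rightarrow> nat" where
  "path_len p = length p - 1"

definition induced_path :: "'a graph \<Rightarrow> 'a list \<Rightarrow> bool" where
  "induced_path G p \<longleftrightarrow> is_path G p \<and>
     (\<forall>j k. j < length p \<longrightarrow> k < length p \<longrightarrow> {p ! j, p ! k} \<in> edges G \<longrightarrow>
        k = Suc j \<or> j = Suc k)"

text \<open>Model of a subdivision of H in G. Up to isomorphism of H, we take the vertices
  of H to be the nails themselves (so verts H \<subseteq> verts G); P e is the path
  realising the edge e of H.\<close>
definition subdivision_model :: "'a graph \<Rightarrow> 'a graph \<Rightarrow> ('a set \<Rightarrow> 'a list) \<Rightarrow> bool" where
  "subdivision_model G H P \<longleftrightarrow> graph H \<and> verts H \<subseteq> verts G \<and>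
     (\<forall>e\<in>edges H. is_path G (P e) \<and> e = {hd (P e), last (P e)} \<and>
        (set (P e) - e) \<inter> verts H = {}) \<and>
     (\<forall>e\<in>edges H. \<forall>e'\<in>edges H. e \<noteq> e' \<longrightarrow> set (P e) \<inter> set (P e') \<subseteq> e \<inter> e')"

text \<open>s-shallow topological minor (s a nonnegative half-integer, given as a real).\<close>
definition shallow_top_minor :: "real \<Rightarrow> 'a graph \<Rightarrow> 'a graph \<Rightarrow> bool" where
  "shallow_top_minor s H G \<longleftrightarrow>
     (\<exists>P. subdivision_model G H P \<and> (\<forall>e\<in>edges H. real (path_len (P e)) \<le> 2 * s + 1))"

definition tnabla :: "real \<Rightarrow> 'a graph \<Rightarrow> real" where
  "tnabla s G = Max {density H | H. shallow_top_minor s H G}"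

definition stable_subdivision :: "nat \<Rightarrow> 'a graph \<Rightarrow> 'a graph \<Rightarrow> bool" where
  "stable_subdivision i H G \<longleftrightarrow>
     (\<exists>P. subdivision_model G H P \<and>
        (\<forall>e\<in>edges H. path_len (P e) = i + 1 \<and> induced_path G (P e)))"

end

theory Submission
  imports Defs
begin

text \<open>
  Take an (r/2)-shallow topological minor H of G of maximum density, so that
  density H \<ge> \<delta>; every edge of H is realised by a path of length at most r + 1.
  Shortcutting each such path along chords turns it into an induced path with the same
  ends and a subset of its vertices, so the result is still a subdivision model of H,
  and each path now has some length i + 1 with i \<le> r.  Sorting the edges of H into the
  r + 1 classes by this length, one class carries at least a 1/(r+1) fraction of the
  edges (pigeonhole).  Keeping all vertices of H but only the edges of that class gives a
  stable i-subdivision of density at least \<delta>/(r+1).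
\<close>

lemma path_shortcut_chord:
  assumes p: "is_path G p" and ab: "Suc a < b" "b < length p"
    and chord: "{p!a, p!b} \<in> edges G"
  defines "q \<equiv> take (Suc a) p @ drop b p"
  shows "is_path G q" "hd q = hd p" "last q = last p" "set q \<subseteq> set p"
    "length q < length p"
proof -
  have len_q: "length q = Suc a + (length p - b)" using ab by (simp add: q_def)
  have nth_q: "q ! m = (if m \<le> a then p ! m else p ! (b + (m - Suc a)))"
    if "m < length q" for m
    using that ab by (auto simp: q_def nth_append len_q)
  have p_facts: "distinct p" "p \<noteq> []" "set p \<subseteq> verts G" using p by (auto simp: is_path_def)
  show "set q \<subseteq> set p" unfolding q_def using set_take_subset set_drop_subset by fastforce
  have "{q ! m, q ! Suc m} \<in> edges G" if m: "Suc m < length q" for m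
  proof -
    consider "m < a" | "m = a" | "m > a" by linarith
    then show ?thesis
    proof cases
      case 1
      then show ?thesis using nth_q[of m] nth_q[of "Suc m"] m p ab unfolding is_path_def by auto
    next
      case 2
      then show ?thesis using nth_q[of m] nth_q[of "Suc m"] m chord by simp
    next
      case 3
      have "Suc (b + (m - Suc a)) < length p" using m 3 len_q by linarith
      moreover have "b + (Suc m - Suc a) = Suc (b + (m - Suc a))" using 3 by simp
      ultimately show ?thesis
        using nth_q[of m] nth_q[of "Suc m"] m 3 p unfolding is_path_def by auto
    qed
  qed
  moreover have "distinct q" unfolding q_def using p_facts ab
    by (simp add: set_take_disj_set_drop_if_distinct)
  moreover have "q \<noteq> []" using len_q by auto
  ultimately show "is_path G q"
    using p_facts \<open>set q \<subseteq> set p\<close> unfolding is_path_def by blast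
  show "hd q = hd p" using p_facts by (simp add: q_def)
  show "last q = last p" using ab by (simp add: q_def)
  show "length q < length p" using len_q ab by simp
qed

text \<open>Every path contains an induced path with the same ends (repeatedly shortcut
  along chords; the length strictly decreases).  Loops cannot occur as chords since
  G is a simple graph.\<close>
lemma induced_path_within:
  assumes "graph G" "is_path G p"
  shows "\<exists>q. induced_path G q \<and> hd q = hd p \<and> last q = last p \<and> set q \<subseteq> set p
    \<and> length q \<le> length p"
  using assms(2)
proof (induction "length p" arbitrary: p rule: less_induct)
  case less
  show ?case
  proof (cases "induced_path G p")
    case True
    then show ?thesis by blast
  next
    case False
    then obtain j k where jk: "j < length p" "k < length p" "{p!j, p!k} \<in> edges G"
      "k \<noteq> Suc j" "j \<noteq> Suc k"
      using less.prems unfolding induced_path_def by blast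
    have "p!j \<noteq> p!k" using jk(3) assms(1) unfolding graph_def by force
    then have "j \<noteq> k" by auto
    obtain a b where ab: "Suc a < b" "b < length p" "{p!a, p!b} \<in> edges G"
    proof (cases "j < k")
      case True
      then show ?thesis using that[of j k] jk by auto
    next
      case False
      then show ?thesis using that[of k j] jk \<open>j \<noteq> k\<close> by (auto simp: insert_commute)
    qed
    note shorter = path_shortcut_chord[OF less.prems ab]
    from less.hyps[OF shorter(5) shorter(1)] shorter(2-4) show ?thesis
      by (metis less_imp_le order_trans shorter(5))
  qed
qed

lemma graph_edge_ends:
  assumes "graph H" "e \<in> edges H"
  obtains u v where "u \<in> verts H" "v \<in> verts H" "u \<noteq> v" "e = {u, v}"
  using assms unfolding graph_def by blast

lemma graph_finite_edges:
  assumes "graph H"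
  shows "finite (edges H)"
proof -
  have "edges H \<subseteq> Pow (verts H)" using assms by (auto elim: graph_edge_ends)
  moreover have "finite (verts H)" using assms unfolding graph_def by blast
  ultimately show ?thesis by (meson finite_Pow_iff finite_subset)
qed

lemma path_len_pos:
  assumes "p \<noteq> []" "hd p \<noteq> last p"
  shows "1 \<le> path_len p"
  using assms unfolding path_len_def by (cases p) (auto split: if_splits simp: Suc_le_eq)

lemma subdivision_model_edge_path:
  assumes "subdivision_model G H P" "e \<in> edges H"
  shows "is_path G (P e)" "e = {hd (P e), last (P e)}" "hd (P e) \<noteq> last (P e)"
proof -
  show "is_path G (P e)" "e = {hd (P e), last (P e)}"
    using assms by (auto simp: subdivision_model_def)
  moreover have "graph H" using assms(1) by (simp add: subdivision_model_def)
  then obtain u v where "u \<noteq> v" "e = {u, v}" using assms(2) by (auto elim: graph_edge_ends)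
  ultimately show "hd (P e) \<noteq> last (P e)" by (metis doubleton_eq_iff)
qed

text \<open>In a subdivision model, each path may be replaced by any path with the same ends
  that uses only vertices of the old one: all disjointness conditions are inherited.\<close>
lemma subdivision_model_replace_paths:
  assumes model: "subdivision_model G H P"
    and Q: "\<And>e. e \<in> edges H \<Longrightarrow> is_path G (Q e) \<and> hd (Q e) = hd (P e)
              \<and> last (Q e) = last (P e) \<and> set (Q e) \<subseteq> set (P e)"
  shows "subdivision_model G H Q"
  unfolding subdivision_model_def
proof (intro conjI ballI impI)
  show "graph H" "verts H \<subseteq> verts G" using model unfolding subdivision_model_def by auto
next
  fix e assume e: "e \<in> edges H"
  have "e = {hd (P e), last (P e)}" "(set (P e) - e) \<inter> verts H = {}"
    using model e unfolding subdivision_model_def by auto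
  then show "is_path G (Q e)" "e = {hd (Q e), last (Q e)}" "(set (Q e) - e) \<inter> verts H = {}"
    using Q[OF e] by auto
next
  fix e e' assume ee: "e \<in> edges H" "e' \<in> edges H" "e \<noteq> e'"
  have "set (P e) \<inter> set (P e') \<subseteq> e \<inter> e'"
    using model ee unfolding subdivision_model_def by blast
  then show "set (Q e) \<inter> set (Q e') \<subseteq> e \<inter> e'" using Q[OF ee(1)] Q[OF ee(2)] by blast
qed

lemma subdivision_model_restrict_edges:
  assumes model: "subdivision_model G H P" and F: "F \<subseteq> edges H"
  shows "subdivision_model G (verts H, F) P"
proof -
  have verts_eq: "verts (verts H, F) = verts H" and edges_eq: "edges (verts H, F) = F"
    unfolding verts_def edges_def by auto
  have "graph H" using model by (simp add: subdivision_model_def)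
  then have "graph (verts H, F)"
    using F unfolding graph_def verts_eq edges_eq by blast
  moreover have "verts H \<subseteq> verts G" using model by (simp add: subdivision_model_def)
  moreover have "\<forall>e\<in>F. is_path G (P e) \<and> e = {hd (P e), last (P e)}
      \<and> (set (P e) - e) \<inter> verts H = {}"
    using model F by (auto simp: subdivision_model_def)
  moreover have "\<forall>e\<in>F. \<forall>e'\<in>F. e \<noteq> e' \<longrightarrow> set (P e) \<inter> set (P e') \<subseteq> e \<inter> e'"
    using model F unfolding subdivision_model_def by (meson subsetD)
  ultimately show ?thesis unfolding subdivision_model_def verts_eq edges_eq by blast
qed

lemma density_restrict_edges_ge:
  assumes "real (card (edges H)) / c \<le> real (card F)"
  shows "density H / c \<le> density (verts H, F)"
proof -
  have "density H / c = (real (card (edges H)) / c) / real (card (verts H))"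
    by (simp add: density_def ac_simps)
  also have "\<dots> \<le> real (card F) / real (card (verts H))"
    by (rule divide_right_mono[OF assms]) simp
  also have "\<dots> = density (verts H, F)"
    by (simp add: density_def verts_def edges_def)
  finally show ?thesis .
qed

lemma stable_subdivision_restrict:
  assumes "subdivision_model G H Q" "F \<subseteq> edges H"
    and "\<forall>e\<in>F. path_len (Q e) = i + 1 \<and> induced_path G (Q e)"
  shows "stable_subdivision i (verts H, F) G"
  unfolding stable_subdivision_def
  using subdivision_model_restrict_edges[OF assms(1,2)] assms(3) by (auto simp: edges_def)

lemma shallow_top_minor_induced_model:
  assumes "graph G" "shallow_top_minor s H G"
  shows "\<exists>Q. subdivision_model G H Q \<and> (\<forall>e\<in>edges H. induced_path G (Q e)
           \<and> 1 \<le> path_len (Q e) \<and> real (path_len (Q e)) \<le> 2 * s + 1)"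
proof -
  obtain P where model: "subdivision_model G H P"
    and short: "\<forall>e\<in>edges H. real (path_len (P e)) \<le> 2 * s + 1"
    using assms(2) unfolding shallow_top_minor_def by blast
  have "\<forall>e\<in>edges H. \<exists>q. induced_path G q \<and> hd q = hd (P e) \<and> last q = last (P e)
      \<and> set q \<subseteq> set (P e) \<and> length q \<le> length (P e)"
    using induced_path_within[OF assms(1) subdivision_model_edge_path(1)[OF model]] by blast
  then obtain Q where Q: "\<forall>e\<in>edges H. induced_path G (Q e) \<and> hd (Q e) = hd (P e)
      \<and> last (Q e) = last (P e) \<and> set (Q e) \<subseteq> set (P e) \<and> length (Q e) \<le> length (P e)"
    by (metis (no_types) bchoice)
  have model_Q: "subdivision_model G H Q"
    by (rule subdivision_model_replace_paths[OF model]) (use Q in \<open>auto simp: induced_path_def\<close>)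
  have "induced_path G (Q e) \<and> 1 \<le> path_len (Q e) \<and> real (path_len (Q e)) \<le> 2 * s + 1"
    if e: "e \<in> edges H" for e
  proof -
    have "Q e \<noteq> []" using subdivision_model_edge_path(1)[OF model_Q e] by (simp add: is_path_def)
    then have "1 \<le> path_len (Q e)"
      using path_len_pos subdivision_model_edge_path(3)[OF model_Q e] by blast
    moreover have "length (Q e) \<le> length (P e)" using Q e by blast
    then have "path_len (Q e) \<le> path_len (P e)" by (simp add: path_len_def diff_le_mono)
    ultimately show ?thesis using Q short e by fastforce
  qed
  with model_Q show ?thesis by blast
qed

lemma pigeonhole_fraction:
  fixes f :: "'b \<Rightarrow> nat"
  assumes "finite A" "\<And>a. a \<in> A \<Longrightarrow> f a \<le> r"
  shows "\<exists>i\<le>r. real (card A) / real (r + 1) \<le> real (card {a \<in> A. f a = i})"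
proof (rule ccontr)
  assume "\<not> ?thesis"
  then have small: "\<forall>i\<in>{..r}. real (card {a \<in> A. f a = i}) < real (card A) / real (r + 1)"
    by force
  have "A = (\<Union>i\<in>{..r}. {a \<in> A. f a = i})" using assms(2) by auto
  also have "card \<dots> = (\<Sum>i\<le>r. card {a \<in> A. f a = i})"
    by (rule card_UN_disjoint) (use assms(1) in auto)
  finally have "card A = (\<Sum>i\<le>r. card {a \<in> A. f a = i})" .
  then have "real (card A) = (\<Sum>i\<le>r. real (card {a \<in> A. f a = i}))" by simp
  also have "\<dots> < (\<Sum>i\<le>r. real (card A) / real (r + 1))"
    by (rule sum_strict_mono) (use small in auto)
  also have "\<dots> = real (card A)" by simp
  finally show False by simp
qed

text \<open>For a finite graph, the maximum in the definition of tnabla ranges over a finite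
  nonempty set (the empty graph is always a minor), so it is attained.\<close>
lemma tnabla_attained:
  assumes "graph G"
  obtains H where "shallow_top_minor s H G" "density H = tnabla s G"
proof -
  let ?minors = "{H. shallow_top_minor s H G}"
  have "?minors \<subseteq> Pow (verts G) \<times> Pow (Pow (verts G))"
  proof
    fix H assume "H \<in> ?minors"
    then obtain P where model: "subdivision_model G H P" unfolding shallow_top_minor_def by blast
    then have "verts H \<subseteq> verts G" "graph H" unfolding subdivision_model_def by auto
    moreover have "edges H \<subseteq> Pow (verts G)"
      using \<open>graph H\<close> \<open>verts H \<subseteq> verts G\<close> by (auto elim: graph_edge_ends)
    ultimately show "H \<in> Pow (verts G) \<times> Pow (Pow (verts G))"
      by (cases H) (auto simp: verts_def edges_def)
  qed
  moreover have "finite (verts G)" using assms unfolding graph_def by blast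
  ultimately have "finite (density ` ?minors)" by (meson finite_Pow_iff finite_SigmaI
        finite_imageI finite_subset)
  moreover have "shallow_top_minor s ({}, {}) G"
    unfolding shallow_top_minor_def subdivision_model_def graph_def verts_def edges_def by simp
  ultimately have "Max (density ` ?minors) \<in> density ` ?minors" by (intro Max_in) auto
  moreover have "{density H | H. shallow_top_minor s H G} = density ` ?minors" by auto
  ultimately show ?thesis using that unfolding tnabla_def by auto
qed

theorem mainTheorem8:
  fixes G :: "'a graph" and r :: nat and \<delta> :: real
  assumes "graph G" and "\<delta> > 0" and "tnabla (real r / 2) G \<ge> \<delta>"
  shows "\<exists>i\<le>r. \<exists>H. stable_subdivision i H G \<and> density H \<ge> \<delta> / real (r + 1)"
proof -
  obtain H where minor: "shallow_top_minor (real r / 2) H G" and dense: "density H \<ge> \<delta>"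
    using tnabla_attained[OF assms(1)] assms(3) by metis
  obtain Q where model: "subdivision_model G H Q"
    and Q: "\<forall>e\<in>edges H. induced_path G (Q e) \<and> 1 \<le> path_len (Q e)
              \<and> real (path_len (Q e)) \<le> 2 * (real r / 2) + 1"
    using shallow_top_minor_induced_model[OF assms(1) minor] by blast
  have "graph H" using model by (simp add: subdivision_model_def)
  then have "finite (edges H)" by (rule graph_finite_edges)
  moreover have "path_len (Q e) - 1 \<le> r" if "e \<in> edges H" for e
  proof -
    have "real (path_len (Q e)) \<le> real (r + 1)" using Q that by auto
    then have "path_len (Q e) \<le> r + 1" by (simp only: of_nat_le_iff)
    then show ?thesis by simp
  qed
  ultimately obtain i where "i \<le> r" and many:
    "real (card (edges H)) / real (r + 1) \<le> real (card {e \<in> edges H. path_len (Q e) - 1 = i})"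
    using pigeonhole_fraction[of "edges H" "\<lambda>e. path_len (Q e) - 1" r] by blast
  define F where "F = {e \<in> edges H. path_len (Q e) - 1 = i}"
  have "\<forall>e\<in>F. path_len (Q e) = i + 1 \<and> induced_path G (Q e)"
    using Q unfolding F_def by fastforce
  then have "stable_subdivision i (verts H, F) G"
    by (intro stable_subdivision_restrict[OF model]) (auto simp: F_def)
  moreover have "\<delta> / real (r + 1) \<le> density (verts H, F)"
    using divide_right_mono[OF dense] density_restrict_edges_ge[OF many[folded F_def]]
    by (meson of_nat_0_le_iff order_trans)
  ultimately show ?thesis using \<open>i \<le> r\<close> by blast
qed

end
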